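(* Let $D$ be the distance matrix of $n$ points in $\mathbb R^d$ with $n>d+2$, let $C$ be its centered distance matrix, and let $\lambda_2(C)$ denote the second largest eigenvalue of $C$ (counted with multiplicity). Then $D=C+\lambda_2(C)\,J$. In particular $D$ is uniquely determined by $C$, and hence by $\Delta(D)$.
   Context: The distance matrix of points $x_1,\dots,x_n\in\mathbb R^d$ is $D_{ij}=\|x_i-x_j\|_2^2$. Let $J=\mathbf 1\mathbf 1^T-I$. The centered distance matrix of $D$ is $C=D-\sigma_DJ$ with $\sigma_D=\mathrm{tr}(DJ)/\|J\|_F^2$, i.e. the component of $D$ orthogonal to $J$ in the trace inner product. $\Delta(D)=(D_{ij}-D_{ik})$ indexed by triples $(i,j,k)$ of pairwise distinct indices with $j<k$; its kernel on symmetric hollow matrices is the span of $J$. *)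

theory Defs
  imports "Jordan_Normal_Form.Char_Poly" "HOL-Library.Multiset"
begin

definition dist_matrix :: "nat \<Rightarrow> (nat \<Rightarrow> real vec) \<Rightarrow> real mat" where
  "dist_matrix n x = mat n n (\<lambda>(i,j). (x i - x j) \<bullet> (x i - x j))"

definition Jmat :: "nat \<Rightarrow> real mat" where
  "Jmat n = mat n n (\<lambda>(i,j). if i = j then 0 else 1)"

definition frob_sq :: "real mat \<Rightarrow> real" where
  "frob_sq A = (\<Sum>i<dim_row A. \<Sum>j<dim_col A. (A $$ (i,j))^2)"

definition sigma :: "real mat \<Rightarrow> real" where
  "sigma D = (\<Sum>i<dim_row D. (D * Jmat (dim_row D)) $$ (i,i)) / frob_sq (Jmat (dim_row D))"

definition centered :: "real mat \<Rightarrow> real mat" where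
  "centered D = D - sigma D \<cdot>\<^sub>m Jmat (dim_row D)"

definition eig_mset :: "real mat \<Rightarrow> real multiset" where
  "eig_mset A = proots (char_poly A)"

definition lambda2 :: "real mat \<Rightarrow> real" where
  "lambda2 A = rev (sorted_list_of_multiset (eig_mset A)) ! 1"

definition Delta :: "real mat \<Rightarrow> nat \<times> nat \<times> nat \<Rightarrow> real" where
  "Delta D = (\<lambda>(i,j,k). if i < dim_row D \<and> j < dim_row D \<and> k < dim_row D \<and> i \<noteq> j \<and> i \<noteq> k \<and> j < k
      then D $$ (i,j) - D $$ (i,k) else 0)"

end

theory Submission
  imports Defs "Jordan_Normal_Form.Schur_Decomposition"
begin

text \<open>Write \<open>C\<^sub>s = D - s J\<close>. For \<open>w\<close> with \<open>\<Sum>\<^sub>i w\<^sub>i = 0\<close> one has \<open>w\<^sup>T J w = -|w|\<^sup>2\<close> and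
  \<open>w\<^sup>T D w = -2 \<Sum>\<^sub>k (\<Sum>\<^sub>i w\<^sub>i x\<^sub>i\<^sub>k)\<^sup>2\<close>, so \<open>w\<^sup>T C\<^sub>s w \<le> s |w|\<^sup>2\<close> on the hyperplane \<open>1\<^sup>\<bottom>\<close>,
  with equality on its subspace orthogonal to the \<open>d\<close> coordinate vectors. Counting eigenvalues
  against these subspaces (spectral theorem and min-max), \<open>C\<^sub>s\<close> has at most one eigenvalue
  above \<open>s\<close> and at least \<open>n - d - 1 \<ge> 2\<close> eigenvalues \<open>\<ge> s\<close>, so \<open>\<lambda>\<^sub>2(C\<^sub>s) = s\<close> for every \<open>s\<close>.
  With \<open>s = \<sigma>\<^sub>D\<close> this is \<open>D = C + \<lambda>\<^sub>2(C) J\<close>. If \<open>\<Delta>(D\<^sub>y) = \<Delta>(D\<^sub>x)\<close> then \<open>D\<^sub>y = D\<^sub>x + c J\<close>,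
  and \<open>\<lambda>\<^sub>2(D\<^sub>y) = 0\<close> while \<open>\<lambda>\<^sub>2(D\<^sub>x + c J) = -c\<close>, whence \<open>c = 0\<close>.\<close>

section \<open>Spectral theorem for real symmetric matrices\<close>

definition orthonormal_mat :: "nat \<Rightarrow> real mat \<Rightarrow> bool" where
  "orthonormal_mat n P \<longleftrightarrow> P \<in> carrier_mat n n \<and> P\<^sup>T * P = 1\<^sub>m n"

lemma orthonormal_matD:
  assumes "orthonormal_mat n P"
  shows "P \<in> carrier_mat n n" "P\<^sup>T * P = 1\<^sub>m n" "P * P\<^sup>T = 1\<^sub>m n"
  using assms mat_mult_left_right_inverse[of "P\<^sup>T" n P] unfolding orthonormal_mat_def by auto

lemma symmetric_mat_index:
  assumes "A \<in> carrier_mat n n" "A\<^sup>T = A" "i < n" "j < n"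
  shows "A $$ (i,j) = A $$ (j,i)"
  using assms index_transpose_mat(1)[of j A i] by simp

lemma orthonormal_mat_mult:
  assumes P: "orthonormal_mat n P" and Q: "orthonormal_mat n Q"
  shows "orthonormal_mat n (P * Q)"
proof -
  note P' = orthonormal_matD[OF P] and Q' = orthonormal_matD[OF Q]
  have "(P * Q)\<^sup>T * (P * Q) = Q\<^sup>T * (P\<^sup>T * P) * Q"
    using P'(1) Q'(1) by (simp add: transpose_mult[of P n n Q n] assoc_mult_mat[of _ n n _ n _ n])
  thus ?thesis using P'(1,2) Q'(1,2) unfolding orthonormal_mat_def by auto
qed

lemma complex_eigenvalue_of_real_symmetric_is_real:
  fixes A :: "real mat"
  assumes A: "A \<in> carrier_mat n n" and sym: "A\<^sup>T = A"
    and z: "eigenvalue (map_mat complex_of_real A) z"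
  shows "z \<in> \<real>"
proof -
  let ?Ac = "map_mat complex_of_real A"
  obtain v where v: "v \<in> carrier_vec n" "v \<noteq> 0\<^sub>v n" "?Ac *\<^sub>v v = z \<cdot>\<^sub>v v"
    using z A unfolding eigenvalue_def eigenvector_def by auto
  have row: "(\<Sum>j<n. of_real (A $$ (i,j)) * v $ j) = z * v $ i" if i: "i < n" for i
  proof -
    have "(?Ac *\<^sub>v v) $ i = (z \<cdot>\<^sub>v v) $ i" using v(3) by simp
    thus ?thesis using i A v(1) by (auto simp: scalar_prod_def lessThan_atLeast0 mult.commute)
  qed
  text \<open>The Hermitian form \<open>v\<^sup>* A v\<close> equals \<open>z |v|\<^sup>2\<close> and is real because \<open>A\<close> is real symmetric.\<close>
  define s where "s = (\<Sum>i<n. \<Sum>j<n. cnj (v $ i) * (of_real (A $$ (i,j)) * v $ j))"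
  define q where "q = (\<Sum>i<n. (cmod (v $ i))\<^sup>2)"
  have "s = (\<Sum>i<n. cnj (v $ i) * (\<Sum>j<n. of_real (A $$ (i,j)) * v $ j))"
    unfolding s_def by (simp add: sum_distrib_left)
  also have "\<dots> = (\<Sum>i<n. cnj (v $ i) * (z * v $ i))"
    by (intro sum.cong refl) (simp add: row)
  also have "\<dots> = z * of_real q"
  proof -
    have "cnj (v $ i) * v $ i = of_real ((cmod (v $ i))\<^sup>2)" for i
      by (subst complex_norm_square) (rule mult.commute)
    thus ?thesis unfolding q_def of_real_sum sum_distrib_left
      by (intro sum.cong refl) (simp add: mult.left_commute)
  qed
  finally have s_zq: "s = z * of_real q" .
  have "cnj s = (\<Sum>i<n. \<Sum>j<n. v $ i * (of_real (A $$ (i,j)) * cnj (v $ j)))"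
    unfolding s_def by (simp add: mult.assoc)
  also have "\<dots> = (\<Sum>j<n. \<Sum>i<n. v $ i * (of_real (A $$ (i,j)) * cnj (v $ j)))"
    by (rule sum.swap)
  also have "\<dots> = s"
  proof -
    have "A $$ (i,j) = A $$ (j,i)" if "i < n" "j < n" for i j
      using symmetric_mat_index[OF A sym that] .
    thus ?thesis unfolding s_def
      by (intro sum.cong refl) (simp add: mult.commute mult.left_commute)
  qed
  finally have "cnj s = s" .
  obtain k where "k < n" "v $ k \<noteq> 0" using v(1,2) by (metis eq_vecI carrier_vecD index_zero_vec)
  hence "0 < q" unfolding q_def
    by (intro sum_pos2[of _ k]) auto
  with s_zq \<open>cnj s = s\<close> have "cnj z = z" by (simp add: complex_eq_iff)
  thus ?thesis using Reals_cnj_iff by blast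
qed

lemma real_symmetric_has_eigenvalue:
  fixes A :: "real mat"
  assumes A: "A \<in> carrier_mat n n" and sym: "A\<^sup>T = A" and n: "0 < n"
  shows "\<exists>e. eigenvalue A e"
proof -
  let ?Ac = "map_mat complex_of_real A"
  have Ac: "?Ac \<in> carrier_mat n n" using A by auto
  obtain zs where cp: "char_poly ?Ac = (\<Prod>z\<leftarrow>zs. [:-z, 1:])" and "length zs = n"
    using char_poly_factorized[OF Ac] by auto
  with n have "zs ! 0 \<in> set zs" by auto
  hence root: "poly (char_poly ?Ac) (zs ! 0) = 0"
    unfolding cp poly_prod_list prod_list_zero_iff by auto
  hence "zs ! 0 \<in> \<real>"
    using complex_eigenvalue_of_real_symmetric_is_real[OF A sym] eigenvalue_root_char_poly[OF Ac] by blast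
  then obtain e where "zs ! 0 = of_real e" by (auto elim: Reals_cases)
  with root have "poly (map_poly complex_of_real (char_poly A)) (of_real e) = 0"
    using of_real_hom.char_poly_hom[OF A] by metis
  hence "poly (char_poly A) e = 0" by (simp add: of_real_hom.poly_map_poly)
  thus ?thesis using eigenvalue_root_char_poly[OF A] by blast
qed

lemma orthonormal_mat_of_normalized_cols:
  fixes ws :: "real vec list"
  assumes ws: "set ws \<subseteq> carrier_vec n" "length ws = n" and orth: "orthogonal ws"
  shows "orthonormal_mat n (mat_of_cols n (map (\<lambda>w. (1 / sqrt (w \<bullet> w)) \<cdot>\<^sub>v w) ws))"
    (is "orthonormal_mat n ?W")
proof -
  have wsi: "ws ! i \<in> carrier_vec n" if "i < n" for i using ws that by auto
  have pos: "0 < ws ! i \<bullet> ws ! i" if "i < n" for i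
    using orthogonalD[OF orth, of i i] that ws(2) wsi[OF that]
      conjugate_square_ge_0_vec[of "ws ! i"] by (simp add: less_le)
  have col: "col ?W i = (1 / sqrt (ws ! i \<bullet> ws ! i)) \<cdot>\<^sub>v ws ! i" if "i < n" for i
    using that ws wsi by simp
  have "col ?W i \<bullet> col ?W j = (if i = j then 1 else 0)" if "i < n" "j < n" for i j
    using orthogonalD[OF orth, of i j] that ws(2) pos[OF that(1)] wsi[OF that(1)] wsi[OF that(2)]
    by (auto simp: col smult_scalar_prod_distrib scalar_prod_smult_distrib real_sqrt_mult[symmetric])
  thus ?thesis unfolding orthonormal_mat_def
    by (intro conjI eq_matI) (auto simp: ws(2))
qed

lemma orthonormal_completion:
  fixes v :: "real vec"
  assumes v: "v \<in> carrier_vec n" "v \<noteq> 0\<^sub>v n"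
  shows "\<exists>W. orthonormal_mat n W \<and> col W 0 = (1 / sqrt (v \<bullet> v)) \<cdot>\<^sub>v v"
proof -
  interpret cof_vec_space n "TYPE(real)" .
  define b where "b = basis_completion v"
  from basis_completion[OF v, folded b_def]
  have b: "distinct b" "\<not> lin_dep (set b)" "set b \<subseteq> carrier_vec n" "hd b = v" "length b = n"
    by auto
  have "n \<noteq> 0" using v by auto
  with b obtain bs where b_v: "b = v # bs" by (cases b) auto
  define ws where "ws = gram_schmidt n b"
  from gram_schmidt_result[OF b(3,1,2) ws_def]
  have ws: "set ws \<subseteq> carrier_vec n" "length ws = n" "orthogonal ws"
    using b(5) unfolding corthogonal_def orthogonal_def by simp_all
  have "ws \<noteq> []" using ws(2) \<open>n \<noteq> 0\<close> by auto
  hence "ws ! 0 = v"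
    using gram_schmidt_hd[OF v(1), of bs] unfolding ws_def b_v by (simp add: hd_conv_nth)
  moreover have "ws ! 0 \<in> carrier_vec n" using ws \<open>n \<noteq> 0\<close> by auto
  ultimately have "col (mat_of_cols n (map (\<lambda>w. (1 / sqrt (w \<bullet> w)) \<cdot>\<^sub>v w) ws)) 0
      = (1 / sqrt (v \<bullet> v)) \<cdot>\<^sub>v v"
    using ws(2) \<open>n \<noteq> 0\<close> by simp
  with orthonormal_mat_of_normalized_cols[OF ws] show ?thesis by (intro exI conjI)
qed

lemma transpose_congruence_mat:
  fixes W A :: "'a :: comm_semiring_0 mat"
  assumes "W \<in> carrier_mat n n" "A \<in> carrier_mat n n"
  shows "(W\<^sup>T * A * W)\<^sup>T = W\<^sup>T * A\<^sup>T * W"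
proof -
  have "(W\<^sup>T * A * W)\<^sup>T = W\<^sup>T * (W\<^sup>T * A)\<^sup>T"
    using assms transpose_mult[of "W\<^sup>T * A" n n W n] by auto
  also have "(W\<^sup>T * A)\<^sup>T = A\<^sup>T * W"
    using assms transpose_mult[of "W\<^sup>T" n n A n] by auto
  finally show ?thesis using assms by (simp add: assoc_mult_mat[of _ n n _ n _ n])
qed

lemma transpose_mult_mult_index:
  fixes W A :: "real mat"
  assumes W: "W \<in> carrier_mat n n" and A: "A \<in> carrier_mat n n" and ij: "i < n" "j < n"
  shows "(W\<^sup>T * A * W) $$ (i,j) = col W i \<bullet> (A *\<^sub>v col W j)"
proof -
  have "(W\<^sup>T * A * W) $$ (i,j) = (W\<^sup>T * (A * W)) $$ (i,j)"
    using W A by (simp add: assoc_mult_mat[of _ n n _ n _ n])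
  also have "\<dots> = col W i \<bullet> col (A * W) j" using W A ij by simp
  also have "col (A * W) j = A *\<^sub>v col W j" by (rule col_mult2[OF A W ij(2)])
  finally show ?thesis .
qed

text \<open>Symmetry makes the first row of \<open>W\<^sup>T A W\<close> vanish along with its first column.\<close>
lemma orthonormal_eigenvector_deflation:
  fixes A W :: "real mat"
  assumes A: "A \<in> carrier_mat (Suc m) (Suc m)" "A\<^sup>T = A" and W: "orthonormal_mat (Suc m) W"
    and ev: "A *\<^sub>v col W 0 = e \<cdot>\<^sub>v col W 0"
  obtains B where "B \<in> carrier_mat m m" "B\<^sup>T = B"
    "W\<^sup>T * A * W = four_block_mat (mat 1 1 (\<lambda>_. e)) (0\<^sub>m 1 m) (0\<^sub>m m 1) B"
proof
  note W' = orthonormal_matD[OF W]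
  define A' where "A' = W\<^sup>T * A * W"
  have A': "A' \<in> carrier_mat (Suc m) (Suc m)" unfolding A'_def using W'(1) A(1) by auto
  have "A'\<^sup>T = A'"
    unfolding A'_def using transpose_congruence_mat[OF W'(1) A(1)] A(2) by simp
  hence sym: "A' $$ (i,j) = A' $$ (j,i)" if "i < Suc m" "j < Suc m" for i j
    using symmetric_mat_index[OF A'] that by blast
  have col0: "A' $$ (i,0) = (if i = 0 then e else 0)" if i: "i < Suc m" for i
  proof -
    have "A' $$ (i,0) = col W i \<bullet> (e \<cdot>\<^sub>v col W 0)"
      unfolding A'_def ev[symmetric] using transpose_mult_mult_index[OF W'(1) A(1) i] by simp
    also have "\<dots> = e * (W\<^sup>T * W) $$ (i,0)" using W'(1) i by simp
    finally show ?thesis using W'(2) i by simp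
  qed
  define B where "B = mat m m (\<lambda>(i,j). A' $$ (Suc i, Suc j))"
  show "B \<in> carrier_mat m m" unfolding B_def by simp
  show "B\<^sup>T = B" unfolding B_def using sym by (intro eq_matI) auto
  show "W\<^sup>T * A * W = four_block_mat (mat 1 1 (\<lambda>_. e)) (0\<^sub>m 1 m) (0\<^sub>m m 1) B"
    unfolding A'_def[symmetric]
  proof (rule eq_matI)
    fix i j assume "i < dim_row (four_block_mat (mat 1 1 (\<lambda>_. e)) (0\<^sub>m 1 m) (0\<^sub>m m 1) B)"
      "j < dim_col (four_block_mat (mat 1 1 (\<lambda>_. e)) (0\<^sub>m 1 m) (0\<^sub>m m 1) B)"
    hence ij: "i < Suc m" "j < Suc m" by (auto simp: B_def)
    show "A' $$ (i,j) = four_block_mat (mat 1 1 (\<lambda>_. e)) (0\<^sub>m 1 m) (0\<^sub>m m 1) B $$ (i,j)"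
    proof (cases i)
      case 0
      show ?thesis
      proof (cases j)
        case (Suc j')
        have "A' $$ (0, j) = A' $$ (j, 0)" using sym ij 0 by blast
        thus ?thesis using col0[OF ij(2)] ij 0 Suc by (simp add: B_def)
      qed (use col0 0 in simp)
    next
      case (Suc i')
      thus ?thesis using col0[OF ij(1)] ij by (cases j) (simp_all add: B_def)
    qed
  qed (use A' in \<open>auto simp: B_def\<close>)
qed

lemma transpose_mult_congruence:
  fixes W F A :: "'a :: comm_semiring_0 mat"
  assumes "W \<in> carrier_mat n n" "F \<in> carrier_mat n n" "A \<in> carrier_mat n n"
  shows "(W * F)\<^sup>T * A * (W * F) = F\<^sup>T * (W\<^sup>T * A * W) * F"
  using assms transpose_mult[of W n n F n] by (simp add: assoc_mult_mat[of _ n n _ n _ n])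

lemma mult_four_block_diag_mat:
  fixes A1 B1 A2 B2 :: "'a :: comm_ring_1 mat"
  assumes "A1 \<in> carrier_mat k k" "B1 \<in> carrier_mat k k" "A2 \<in> carrier_mat m m" "B2 \<in> carrier_mat m m"
  shows "four_block_mat A1 (0\<^sub>m k m) (0\<^sub>m m k) A2 * four_block_mat B1 (0\<^sub>m k m) (0\<^sub>m m k) B2
    = four_block_mat (A1 * B1) (0\<^sub>m k m) (0\<^sub>m m k) (A2 * B2)"
proof -
  have z: "0\<^sub>m k m \<in> carrier_mat k m" "0\<^sub>m m k \<in> carrier_mat m k" by auto
  show ?thesis using mult_four_block_mat[OF assms(1) z assms(3) assms(2) z assms(4)] assms by simp
qed

lemma diagonal_four_block_mat:
  assumes A: "diagonal_mat A" "A \<in> carrier_mat k k" and D: "diagonal_mat D" "D \<in> carrier_mat m m"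
  shows "diagonal_mat (four_block_mat A (0\<^sub>m k m) (0\<^sub>m m k) D)"
proof -
  have A0: "A $$ (i,j) = 0" if "i < k" "j < k" "i \<noteq> j" for i j
    using A that unfolding diagonal_mat_def by auto
  have D0: "D $$ (i,j) = 0" if "i < m" "j < m" "i \<noteq> j" for i j
    using D that unfolding diagonal_mat_def by auto
  show ?thesis
    unfolding diagonal_mat_def using A(2) D(2) by (auto simp: A0 D0)
qed

lemma orthonormal_diag_block_extension:
  fixes B Q :: "real mat"
  assumes B: "B \<in> carrier_mat m m" and Q: "orthonormal_mat m Q" "diagonal_mat (Q\<^sup>T * B * Q)"
  defines "F \<equiv> four_block_mat (1\<^sub>m 1) (0\<^sub>m 1 m) (0\<^sub>m m 1) Q"
  shows "orthonormal_mat (Suc m) F"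
    and "diagonal_mat (F\<^sup>T * four_block_mat (mat 1 1 (\<lambda>_. e)) (0\<^sub>m 1 m) (0\<^sub>m m 1) B * F)"
proof -
  let ?E = "mat 1 1 (\<lambda>_. e) :: real mat"
  note Q' = orthonormal_matD[OF Q(1)]
  have FT: "F\<^sup>T = four_block_mat (1\<^sub>m 1) (0\<^sub>m 1 m) (0\<^sub>m m 1) Q\<^sup>T"
    unfolding F_def using Q'(1) by (subst transpose_four_block_mat) auto
  have "F\<^sup>T * F = four_block_mat (1\<^sub>m 1 * 1\<^sub>m 1) (0\<^sub>m 1 m) (0\<^sub>m m 1) (Q\<^sup>T * Q)"
    unfolding FT unfolding F_def using Q'(1) by (intro mult_four_block_diag_mat) auto
  also have "\<dots> = 1\<^sub>m (Suc m)" using Q'(2) four_block_one_mat[of 1 m] by simp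
  finally show "orthonormal_mat (Suc m) F"
    unfolding orthonormal_mat_def F_def using Q'(1) by auto
  have "F\<^sup>T * four_block_mat ?E (0\<^sub>m 1 m) (0\<^sub>m m 1) B
      = four_block_mat (1\<^sub>m 1 * ?E) (0\<^sub>m 1 m) (0\<^sub>m m 1) (Q\<^sup>T * B)"
    unfolding FT using Q'(1) B by (intro mult_four_block_diag_mat) auto
  also have "\<dots> * F = four_block_mat (1\<^sub>m 1 * ?E * 1\<^sub>m 1) (0\<^sub>m 1 m) (0\<^sub>m m 1) (Q\<^sup>T * B * Q)"
    unfolding F_def using Q'(1) B by (intro mult_four_block_diag_mat) auto
  also have "\<dots> = four_block_mat ?E (0\<^sub>m 1 m) (0\<^sub>m m 1) (Q\<^sup>T * B * Q)" by simp
  finally have eq: "F\<^sup>T * four_block_mat ?E (0\<^sub>m 1 m) (0\<^sub>m m 1) B * F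
      = four_block_mat ?E (0\<^sub>m 1 m) (0\<^sub>m m 1) (Q\<^sup>T * B * Q)" .
  have E: "diagonal_mat ?E" "?E \<in> carrier_mat 1 1" by (auto simp: diagonal_mat_def)
  have "Q\<^sup>T * B * Q \<in> carrier_mat m m" using Q'(1) B by auto
  from diagonal_four_block_mat[OF E Q(2) this]
  show "diagonal_mat (F\<^sup>T * four_block_mat ?E (0\<^sub>m 1 m) (0\<^sub>m m 1) B * F)" unfolding eq .
qed

theorem real_symmetric_orthonormal_diagonalization:
  fixes A :: "real mat"
  assumes "A \<in> carrier_mat n n" "A\<^sup>T = A"
  shows "\<exists>P. orthonormal_mat n P \<and> diagonal_mat (P\<^sup>T * A * P)"
  using assms
proof (induction n arbitrary: A)
  case 0
  show ?case
    by (rule exI[of _ "1\<^sub>m 0"]) (use 0 in \<open>auto simp: orthonormal_mat_def diagonal_mat_def\<close>)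
next
  case (Suc m A)
  obtain e where e: "eigenvalue A e" using real_symmetric_has_eigenvalue Suc.prems by blast
  obtain v where v: "v \<in> carrier_vec (Suc m)" "v \<noteq> 0\<^sub>v (Suc m)" "A *\<^sub>v v = e \<cdot>\<^sub>v v"
    using e Suc.prems(1) unfolding eigenvalue_def eigenvector_def by auto
  obtain W where W: "orthonormal_mat (Suc m) W" and W0: "col W 0 = (1 / sqrt (v \<bullet> v)) \<cdot>\<^sub>v v"
    using orthonormal_completion[OF v(1,2)] by blast
  have "A *\<^sub>v col W 0 = e \<cdot>\<^sub>v col W 0"
    unfolding W0 using Suc.prems(1) v by (simp add: mult_mat_vec smult_smult_assoc mult.commute)
  then obtain B where B: "B \<in> carrier_mat m m" "B\<^sup>T = B"
    and WAW: "W\<^sup>T * A * W = four_block_mat (mat 1 1 (\<lambda>_. e)) (0\<^sub>m 1 m) (0\<^sub>m m 1) B"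
    using orthonormal_eigenvector_deflation[OF Suc.prems W] by blast
  obtain Q where Q: "orthonormal_mat m Q" "diagonal_mat (Q\<^sup>T * B * Q)"
    using Suc.IH[OF B(1,2)] by blast
  define F where "F = four_block_mat (1\<^sub>m 1) (0\<^sub>m 1 m) (0\<^sub>m m 1) Q"
  have F: "orthonormal_mat (Suc m) F"
    and "diagonal_mat (F\<^sup>T * (W\<^sup>T * A * W) * F)"
    unfolding F_def WAW by (rule orthonormal_diag_block_extension[OF B(1) Q])+
  moreover have "(W * F)\<^sup>T * A * (W * F) = F\<^sup>T * (W\<^sup>T * A * W) * F"
    by (rule transpose_mult_congruence[OF orthonormal_matD(1)[OF W] orthonormal_matD(1)[OF F] Suc.prems(1)])
  ultimately show ?case using orthonormal_mat_mult[OF W F] by auto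
qed
section \<open>Counting eigenvalues by quadratic forms\<close>

lemma proots_prod_list_linear: "proots (\<Prod>a\<leftarrow>xs. [:- a, 1:]) = mset (xs :: 'a :: idom list)"
proof (induction xs)
  case (Cons a xs)
  have "proots ([:- a, 1:] * (\<Prod>a\<leftarrow>xs. [:- a, 1:])) = proots [:- a, 1:] + proots (\<Prod>a\<leftarrow>xs. [:- a, 1:])"
    by (rule proots_mult) (auto simp: prod_list_zero_iff)
  also have "proots [:- a, 1:] = {#a#}" using proots_linear_factor[of "-a"] by simp
  finally show ?case using Cons.IH by simp
qed simp

lemma eig_mset_orthonormal_diag:
  fixes C P :: "real mat"
  assumes C: "C \<in> carrier_mat n n" and P: "orthonormal_mat n P" and diag: "diagonal_mat (P\<^sup>T * C * P)"
  shows "eig_mset C = mset (map (\<lambda>k. (P\<^sup>T * C * P) $$ (k,k)) [0..<n])"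
proof -
  note P' = orthonormal_matD[OF P]
  define L where "L = P\<^sup>T * C * P"
  have L: "L \<in> carrier_mat n n" unfolding L_def using P'(1) C by auto
  have "P * L * P\<^sup>T = (P * P\<^sup>T) * C * (P * P\<^sup>T)"
    unfolding L_def using P'(1) C by (simp add: assoc_mult_mat[of _ n n _ n _ n])
  hence "similar_mat_wit C L P P\<^sup>T"
    unfolding similar_mat_wit_def using P' C L by (auto simp: Let_def)
  hence "char_poly C = char_poly L" by (intro char_poly_similar) (auto simp: similar_mat_def)
  also have "\<dots> = (\<Prod>a\<leftarrow>diag_mat L. [:- a, 1:])"
    using diag L unfolding L_def[symmetric]
    by (intro char_poly_upper_triangular) (auto simp: diagonal_mat_def upper_triangular_def)
  finally have "eig_mset C = mset (diag_mat L)"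
    unfolding eig_mset_def by (simp only: proots_prod_list_linear)
  also have "diag_mat L = map (\<lambda>k. L $$ (k,k)) [0..<n]" using L by (simp add: diag_mat_def)
  finally show ?thesis unfolding L_def .
qed

lemma quadratic_form_diagonal_mat:
  fixes L :: "real mat"
  assumes L: "diagonal_mat L" "L \<in> carrier_mat n n" and c: "c \<in> carrier_vec n"
  shows "c \<bullet> (L *\<^sub>v c) = (\<Sum>k<n. L $$ (k,k) * (c $ k)\<^sup>2)"
proof -
  have "row L k \<bullet> c = L $$ (k,k) * c $ k" if k: "k < n" for k
  proof -
    have "row L k \<bullet> c = (\<Sum>j\<in>{0..<n}. if j = k then L $$ (k,k) * c $ k else 0)"
      unfolding scalar_prod_def using L c k
      by (intro sum.cong) (auto simp: diagonal_mat_def)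
    thus ?thesis using k by simp
  qed
  thus ?thesis using L(2) c
    by (auto simp: scalar_prod_def atLeast0LessThan power2_eq_square mult_ac intro: sum.cong)
qed

lemma quadratic_form_orthonormal_diag:
  fixes C P :: "real mat"
  assumes C: "C \<in> carrier_mat n n" and P: "orthonormal_mat n P" and diag: "diagonal_mat (P\<^sup>T * C * P)"
    and w: "w \<in> carrier_vec n"
  shows "w \<bullet> (C *\<^sub>v w) = (\<Sum>k<n. (P\<^sup>T * C * P) $$ (k,k) * (col P k \<bullet> w)\<^sup>2)"
proof -
  note P' = orthonormal_matD[OF P]
  define c where "c = P\<^sup>T *\<^sub>v w"
  have c: "c \<in> carrier_vec n" unfolding c_def using P'(1) w by auto
  have w_Pc: "w = P *\<^sub>v c" unfolding c_def using P'(1,3) w by (simp flip: assoc_mult_mat_vec)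
  have "w \<bullet> (C *\<^sub>v w) = (C *\<^sub>v w) \<bullet> (P *\<^sub>v c)"
    using w C w_Pc comm_scalar_prod[of w n "C *\<^sub>v w"] by simp
  also have "\<dots> = (P\<^sup>T *\<^sub>v (C *\<^sub>v (P *\<^sub>v c))) \<bullet> c"
    using transpose_vec_mult_scalar[OF P'(1) c, of "C *\<^sub>v w"] C w w_Pc by simp
  also have "\<dots> = c \<bullet> ((P\<^sup>T * C * P) *\<^sub>v c)"
    using P'(1) C c assoc_mult_mat_vec[of "P\<^sup>T" n n "C * P" n c] assoc_mult_mat_vec[of C n n P n c]
    by (simp add: comm_scalar_prod[of _ n c])
  also have "\<dots> = (\<Sum>k<n. (P\<^sup>T * C * P) $$ (k,k) * (c $ k)\<^sup>2)"
    using diag P'(1) C c by (intro quadratic_form_diagonal_mat) auto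
  finally show ?thesis using P'(1) w by (simp add: c_def)
qed

lemma sum_sq_orthonormal_coords:
  assumes P: "orthonormal_mat n P" and w: "w \<in> carrier_vec n"
  shows "w \<bullet> w = (\<Sum>k<n. (col P k \<bullet> w)\<^sup>2)"
proof -
  have "P\<^sup>T * 1\<^sub>m n * P = 1\<^sub>m n" using orthonormal_matD[OF P] by simp
  moreover have "diagonal_mat (1\<^sub>m n :: real mat)" by (simp add: diagonal_mat_def)
  ultimately show ?thesis
    using quadratic_form_orthonormal_diag[OF one_carrier_mat P _ w] w by simp
qed

lemma exists_nonzero_orthogonal_vec:
  fixes vs :: "'a :: idom vec list"
  assumes vs: "set vs \<subseteq> carrier_vec n" and len: "length vs < n"
  shows "\<exists>w \<in> carrier_vec n. w \<noteq> 0\<^sub>v n \<and> (\<forall>v \<in> set vs. v \<bullet> w = 0)"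
proof -
  define f where "f i = (if i < length vs then vs ! i else 0\<^sub>v n)" for i
  have "mat\<^sub>r n n f = mat\<^sub>r n n (\<lambda>i. if i = n - 1 then 0\<^sub>v n else f i)"
    using len by (intro eq_matI) (auto simp: f_def)
  also have "det \<dots> = 0"
    using len vs nth_mem by (intro det_row_0) (auto simp: f_def Pi_def)
  finally obtain w where w: "w \<in> carrier_vec n" "w \<noteq> 0\<^sub>v n" "mat\<^sub>r n n f *\<^sub>v w = 0\<^sub>v n"
    using det_0_iff_vec_prod_zero[of "mat\<^sub>r n n f" n] by auto
  have "vs ! i \<bullet> w = 0" if i: "i < length vs" for i
  proof -
    have "f i = vs ! i" "vs ! i \<in> carrier_vec n" using i vs nth_mem[OF i] by (auto simp: f_def)
    hence "row (mat\<^sub>r n n f) i = vs ! i" using row_mat_of_row_fun[of i n f n] i len by simp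
    thus ?thesis using arg_cong[OF w(3), of "\<lambda>u. u $ i"] i len by simp
  qed
  thus ?thesis using w(1,2) by (metis in_set_conv_nth)
qed


lemma length_filter_upt: "length (filter Q [0..<n]) = card {k. k < n \<and> Q k}"
proof -
  have "card (set (filter Q [0..<n])) = length (filter Q [0..<n])" by (intro distinct_card) simp
  moreover have "set (filter Q [0..<n]) = {k. k < n \<and> Q k}" by auto
  ultimately show ?thesis by simp
qed

text \<open>Min-max counting: a form bounded by \<open>s |w|\<^sup>2\<close> on the orthogonal complement of
  \<open>vs\<close> leaves room for at most \<open>length vs\<close> eigenvalues above \<open>s\<close>, since otherwise their
  eigenvectors would span a space meeting that complement.\<close>
lemma orthonormal_diag_card_above_le:
  fixes C P :: "real mat"
  assumes C: "C \<in> carrier_mat n n" and P: "orthonormal_mat n P" and diag: "diagonal_mat (P\<^sup>T * C * P)"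
    and vs: "set vs \<subseteq> carrier_vec n"
    and form: "\<And>w. w \<in> carrier_vec n \<Longrightarrow> \<forall>v\<in>set vs. v \<bullet> w = 0 \<Longrightarrow> w \<bullet> (C *\<^sub>v w) \<le> s * (w \<bullet> w)"
  shows "card {k. k < n \<and> s < (P\<^sup>T * C * P) $$ (k,k)} \<le> length vs"
proof (rule ccontr)
  define lam where "lam k = (P\<^sup>T * C * P) $$ (k,k)" for k
  define ks where "ks = filter (\<lambda>k. \<not> s < lam k) [0..<n]"
  assume "\<not> card {k. k < n \<and> s < (P\<^sup>T * C * P) $$ (k,k)} \<le> length vs"
  moreover have "length (filter (\<lambda>k. s < lam k) [0..<n]) + length ks = n"
    unfolding ks_def using sum_length_filter_compl[of _ "[0..<n]"] by simp
  ultimately have "length (vs @ map (col P) ks) < n"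
    by (simp add: length_filter_upt lam_def)
  moreover have "set (vs @ map (col P) ks) \<subseteq> carrier_vec n"
    using vs orthonormal_matD(1)[OF P] by auto
  ultimately obtain w where w: "w \<in> carrier_vec n" "w \<noteq> 0\<^sub>v n"
    and orth: "\<forall>v \<in> set (vs @ map (col P) ks). v \<bullet> w = 0"
    using exists_nonzero_orthogonal_vec by blast
  have coeff0: "col P k \<bullet> w = 0" if "k < n" "\<not> s < lam k" for k
    using orth that by (auto simp: ks_def)
  have "0 < w \<bullet> w" using w conjugate_square_greater_0_vec[of w n] by simp
  then obtain k where k: "k < n" "col P k \<bullet> w \<noteq> 0"
    unfolding sum_sq_orthonormal_coords[OF P w(1)] by (metis (no_types, lifting) lessThan_iff power_zero_numeral sum.neutral less_irrefl)
  have "s * (w \<bullet> w) = (\<Sum>l<n. s * (col P l \<bullet> w)\<^sup>2)"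
    unfolding sum_sq_orthonormal_coords[OF P w(1)] by (simp add: sum_distrib_left)
  also have "\<dots> < (\<Sum>l<n. lam l * (col P l \<bullet> w)\<^sup>2)"
  proof (rule sum_strict_mono_ex1)
    show "\<forall>l\<in>{..<n}. s * (col P l \<bullet> w)\<^sup>2 \<le> lam l * (col P l \<bullet> w)\<^sup>2"
    proof
      fix l assume l: "l \<in> {..<n}"
      show "s * (col P l \<bullet> w)\<^sup>2 \<le> lam l * (col P l \<bullet> w)\<^sup>2"
        using coeff0[of l] l by (cases "s < lam l") (auto intro: mult_right_mono)
    qed
    show "\<exists>l\<in>{..<n}. s * (col P l \<bullet> w)\<^sup>2 < lam l * (col P l \<bullet> w)\<^sup>2"
      using k coeff0[of k] by (intro bexI[of _ k]) auto
  qed simp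
  also have "\<dots> = w \<bullet> (C *\<^sub>v w)"
    unfolding quadratic_form_orthonormal_diag[OF C P diag w(1)] lam_def ..
  finally show False using form[OF w(1)] orth by auto
qed

lemma size_filter_mset_map_upt:
  "size (filter_mset Q (mset (map f [0..<n]))) = card {k. k < n \<and> Q (f k)}"
  by (simp only: mset_filter[symmetric] size_mset filter_map length_map length_filter_upt comp_def)

theorem symmetric_card_eigenvalues_above_le:
  fixes C :: "real mat"
  assumes C: "C \<in> carrier_mat n n" "C\<^sup>T = C" and vs: "set vs \<subseteq> carrier_vec n"
    and form: "\<And>w. w \<in> carrier_vec n \<Longrightarrow> \<forall>v\<in>set vs. v \<bullet> w = 0 \<Longrightarrow> w \<bullet> (C *\<^sub>v w) \<le> s * (w \<bullet> w)"
  shows "size (filter_mset (\<lambda>e. s < e) (eig_mset C)) \<le> length vs"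
proof -
  obtain P where P: "orthonormal_mat n P" "diagonal_mat (P\<^sup>T * C * P)"
    using real_symmetric_orthonormal_diagonalization[OF C] by blast
  show ?thesis
    unfolding eig_mset_orthonormal_diag[OF C(1) P] size_filter_mset_map_upt
    using orthonormal_diag_card_above_le[OF C(1) P vs form] .
qed

theorem symmetric_card_eigenvalues_at_least_ge:
  fixes C :: "real mat"
  assumes C: "C \<in> carrier_mat n n" "C\<^sup>T = C" and vs: "set vs \<subseteq> carrier_vec n"
    and form: "\<And>w. w \<in> carrier_vec n \<Longrightarrow> \<forall>v\<in>set vs. v \<bullet> w = 0 \<Longrightarrow> s * (w \<bullet> w) \<le> w \<bullet> (C *\<^sub>v w)"
  shows "n - length vs \<le> size (filter_mset (\<lambda>e. s \<le> e) (eig_mset C))"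
proof -
  obtain P where P: "orthonormal_mat n P" "diagonal_mat (P\<^sup>T * C * P)"
    using real_symmetric_orthonormal_diagonalization[OF C] by blast
  define lam where "lam k = (P\<^sup>T * C * P) $$ (k,k)" for k
  have "P\<^sup>T * - C * P = - (P\<^sup>T * C * P)" using orthonormal_matD(1)[OF P(1)] C(1) by simp
  hence neg_diag: "diagonal_mat (P\<^sup>T * - C * P)" using P(2) by (simp add: diagonal_mat_def)
  have neg: "(P\<^sup>T * - C * P) $$ (k,k) = - lam k" if "k < n" for k
    using \<open>P\<^sup>T * - C * P = - (P\<^sup>T * C * P)\<close> orthonormal_matD(1)[OF P(1)] C(1) that
    by (simp add: lam_def)
  have "card {k. k < n \<and> - s < (P\<^sup>T * - C * P) $$ (k,k)} \<le> length vs"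
    using C(1) vs form
    by (intro orthonormal_diag_card_above_le[OF _ P(1) neg_diag]) auto
  also have "{k. k < n \<and> - s < (P\<^sup>T * - C * P) $$ (k,k)} = {..<n} - {k. k < n \<and> s \<le> lam k}"
    using neg by force
  also have "card \<dots> = n - card {k. k < n \<and> s \<le> lam k}"
    by (subst card_Diff_subset) auto
  finally show ?thesis
    unfolding eig_mset_orthonormal_diag[OF C(1) P] size_filter_mset_map_upt lam_def by linarith
qed

lemma second_largest_eq:
  fixes M :: "'a :: linorder multiset"
  assumes above: "size (filter_mset (\<lambda>y. s < y) M) \<le> 1"
    and at_least: "2 \<le> size (filter_mset (\<lambda>y. s \<le> y) M)"
  shows "rev (sorted_list_of_multiset M) ! 1 = s"
proof -
  define R where "R = rev (sorted_list_of_multiset M)"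
  have sorted: "sorted_wrt (\<ge>) R" unfolding R_def sorted_wrt_rev by simp
  have count: "size (filter_mset Q M) = length (filter Q R)" for Q
    unfolding R_def by (metis mset_filter mset_rev mset_sorted_list_of_multiset size_mset)
  have "2 \<le> length R" using at_least count[of "\<lambda>y. s \<le> y"] length_filter_le[of "\<lambda>y. s \<le> y" R] by linarith
  then obtain a b rest where R: "R = a # b # rest" by (cases R; cases "tl R") auto
  with sorted have "b \<le> a" "\<forall>y \<in> set rest. y \<le> b" by auto
  have "\<not> b < s"
  proof
    assume "b < s"
    hence "\<forall>y \<in> set (b # rest). \<not> s \<le> y"
      using \<open>\<forall>y \<in> set rest. y \<le> b\<close> by (auto simp: not_le intro: le_less_trans)
    hence "length (filter (\<lambda>y. s \<le> y) (b # rest)) = 0" by (simp only: filter_empty_conv length_0_conv)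
    moreover have "length (filter (\<lambda>y. s \<le> y) R) \<le> Suc (length (filter (\<lambda>y. s \<le> y) (b # rest)))"
      unfolding R by simp
    ultimately show False using at_least count[of "\<lambda>y. s \<le> y"] by linarith
  qed
  moreover have "\<not> s < b"
  proof
    assume "s < b"
    moreover from this \<open>b \<le> a\<close> have "s < a" by (rule less_le_trans)
    ultimately have "2 \<le> length (filter (\<lambda>y. s < y) R)" unfolding R by simp
    thus False using above count[of "\<lambda>y. s < y"] by simp
  qed
  ultimately show ?thesis unfolding R_def[symmetric] R by simp
qed


section \<open>Distance matrices\<close>

lemma dist_matrix_carrier: "dist_matrix n x \<in> carrier_mat n n"
  unfolding dist_matrix_def by simp

lemma dist_matrix_index:
  assumes x: "\<forall>i<n. x i \<in> carrier_vec d" and ij: "i < n" "j < n"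
  shows "dist_matrix n x $$ (i,j) = (\<Sum>k<d. (x i $ k - x j $ k)\<^sup>2)"
  using x ij unfolding dist_matrix_def
  by (auto simp: scalar_prod_def power2_eq_square atLeast0LessThan)

lemma dist_matrix_diag:
  assumes "\<forall>i<n. x i \<in> carrier_vec d" "i < n"
  shows "dist_matrix n x $$ (i,i) = 0"
  using dist_matrix_index[OF assms assms(2)] by simp

lemma dist_matrix_transpose:
  assumes "\<forall>i<n. x i \<in> carrier_vec d"
  shows "(dist_matrix n x)\<^sup>T = dist_matrix n x"
  using dist_matrix_index[OF assms] dist_matrix_carrier[of n x]
  by (intro eq_matI) (auto simp: power2_commute)

lemma quadratic_form_mat_sum:
  fixes M :: "'a :: comm_ring mat"
  assumes M: "M \<in> carrier_mat n n" and w: "w \<in> carrier_vec n"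
  shows "w \<bullet> (M *\<^sub>v w) = (\<Sum>i<n. \<Sum>j<n. w $ i * w $ j * M $$ (i,j))"
  using M w
  by (auto simp: scalar_prod_def atLeast0LessThan sum_distrib_left ac_simps intro!: sum.cong)

lemma double_sum_weighted_sq_diff:
  fixes w a :: "nat \<Rightarrow> real"
  shows "(\<Sum>i\<in>I. \<Sum>j\<in>I. w i * w j * (a i - a j)\<^sup>2)
     = 2 * (\<Sum>i\<in>I. w i) * (\<Sum>i\<in>I. w i * (a i)\<^sup>2) - 2 * (\<Sum>i\<in>I. w i * a i)\<^sup>2"
proof -
  have "(\<Sum>i\<in>I. \<Sum>j\<in>I. w i * w j * (a i - a j)\<^sup>2)
     = (\<Sum>i\<in>I. \<Sum>j\<in>I. (w i * (a i)\<^sup>2) * w j + w i * (w j * (a j)\<^sup>2) - 2 * (w i * a i) * (w j * a j))"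
    by (intro sum.cong refl) (simp add: power2_eq_square algebra_simps)
  also have "\<dots> = (\<Sum>i\<in>I. (w i * (a i)\<^sup>2) * (\<Sum>j\<in>I. w j) + w i * (\<Sum>j\<in>I. w j * (a j)\<^sup>2)
      - (w i * a i) * (2 * (\<Sum>j\<in>I. w j * a j)))"
    by (intro sum.cong refl)
      (simp add: sum.distrib sum_subtractf sum_distrib_left sum_distrib_right algebra_simps)
  also have "\<dots> = (\<Sum>i\<in>I. w i * (a i)\<^sup>2) * (\<Sum>j\<in>I. w j) + (\<Sum>i\<in>I. w i) * (\<Sum>j\<in>I. w j * (a j)\<^sup>2)
      - (\<Sum>i\<in>I. w i * a i) * (2 * (\<Sum>j\<in>I. w j * a j))"
    by (simp add: sum.distrib sum_subtractf sum_distrib_right)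
  finally show ?thesis by (simp add: power2_eq_square algebra_simps)
qed

lemma quadratic_form_dist_matrix_minus_Jmat:
  fixes x :: "nat \<Rightarrow> real vec"
  assumes x: "\<forall>i<n. x i \<in> carrier_vec d" and w: "w \<in> carrier_vec n" and w0: "(\<Sum>i<n. w $ i) = 0"
  shows "w \<bullet> ((dist_matrix n x - s \<cdot>\<^sub>m Jmat n) *\<^sub>v w)
     = s * (w \<bullet> w) - 2 * (\<Sum>k<d. (\<Sum>i<n. w $ i * x i $ k)\<^sup>2)"
proof -
  have C: "dist_matrix n x - s \<cdot>\<^sub>m Jmat n \<in> carrier_mat n n"
    unfolding dist_matrix_def Jmat_def carrier_mat_def by simp
  have "w \<bullet> ((dist_matrix n x - s \<cdot>\<^sub>m Jmat n) *\<^sub>v w) = (\<Sum>i<n. \<Sum>j<n.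
      w $ i * w $ j * ((\<Sum>k<d. (x i $ k - x j $ k)\<^sup>2) - s * (if i = j then 0 else 1)))"
    unfolding quadratic_form_mat_sum[OF C w]
    by (intro sum.cong refl) (simp add: dist_matrix_index[OF x] Jmat_def dist_matrix_carrier)
  also have "\<dots> = (\<Sum>i<n. \<Sum>j<n. w $ i * w $ j * (\<Sum>k<d. (x i $ k - x j $ k)\<^sup>2))
      - s * (\<Sum>i<n. \<Sum>j<n. w $ i * w $ j * (if i = j then 0 else 1))"
    by (simp add: right_diff_distrib sum_subtractf sum_distrib_left mult.commute mult.left_commute)
  also have "(\<Sum>i<n. \<Sum>j<n. w $ i * w $ j * (\<Sum>k<d. (x i $ k - x j $ k)\<^sup>2))
      = (\<Sum>k<d. \<Sum>i<n. \<Sum>j<n. w $ i * w $ j * (x i $ k - x j $ k)\<^sup>2)"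
    by (simp add: sum_distrib_left sum.swap[of _ "{..<d}"])
  also have "\<dots> = (\<Sum>k<d. - 2 * (\<Sum>i<n. w $ i * x i $ k)\<^sup>2)"
    by (intro sum.cong refl) (simp add: double_sum_weighted_sq_diff w0)
  also have "(\<Sum>i<n. \<Sum>j<n. w $ i * w $ j * (if i = j then 0 else 1))
      = (\<Sum>i<n. w $ i * ((\<Sum>j<n. w $ j) - w $ i))"
  proof (intro sum.cong refl)
    fix i assume i: "i \<in> {..<n}"
    have "(\<Sum>j<n. w $ i * w $ j * (if i = j then 0 else 1))
        = (\<Sum>j<n. w $ i * w $ j - (if j = i then w $ i * w $ i else 0))"
      by (intro sum.cong refl) auto
    also have "\<dots> = w $ i * (\<Sum>j<n. w $ j) - w $ i * w $ i"
      using i by (simp add: sum_subtractf sum_distrib_left)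
    finally show "(\<Sum>j<n. w $ i * w $ j * (if i = j then 0 else 1)) = w $ i * ((\<Sum>j<n. w $ j) - w $ i)"
      by (simp add: algebra_simps)
  qed
  also have "\<dots> = - (w \<bullet> w)" using w0 w
    by (simp add: right_diff_distrib sum_subtractf scalar_prod_def atLeast0LessThan sum_negf
        flip: sum_distrib_right)
  finally show ?thesis by (simp add: sum_distrib_left sum_negf)
qed


lemma lambda2_dist_matrix_minus_Jmat:
  fixes x :: "nat \<Rightarrow> real vec"
  assumes x: "\<forall>i<n. x i \<in> carrier_vec d" and nd: "d + 2 < n"
  shows "lambda2 (dist_matrix n x - s \<cdot>\<^sub>m Jmat n) = s"
proof -
  define C where "C = dist_matrix n x - s \<cdot>\<^sub>m Jmat n"
  have C: "C \<in> carrier_mat n n" "C\<^sup>T = C"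
    unfolding C_def using dist_matrix_carrier[of n x]
    by (auto intro!: eq_matI simp: Jmat_def dist_matrix_index[OF x] power2_commute)
  define ones where "ones = vec n (\<lambda>_. 1 :: real)"
  define coord where "coord k = vec n (\<lambda>i. x i $ k)" for k
  have ones: "ones \<bullet> w = (\<Sum>i<n. w $ i)" and coord: "coord k \<bullet> w = (\<Sum>i<n. w $ i * x i $ k)"
    if "w \<in> carrier_vec n" for w k
    using that by (auto simp: ones_def coord_def scalar_prod_def atLeast0LessThan mult.commute)
  have form: "w \<bullet> (C *\<^sub>v w) = s * (w \<bullet> w) - 2 * (\<Sum>k<d. (coord k \<bullet> w)\<^sup>2)"
    if "w \<in> carrier_vec n" "ones \<bullet> w = 0" for w
    using quadratic_form_dist_matrix_minus_Jmat[OF x that(1)] that unfolding C_def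
    by (simp add: ones coord)
  have "size (filter_mset (\<lambda>e. s < e) (eig_mset C)) \<le> length [ones]"
    using form by (intro symmetric_card_eigenvalues_above_le[OF C]) (auto simp: ones_def sum_nonneg)
  moreover have "n - length (ones # map coord [0..<d]) \<le> size (filter_mset (\<lambda>e. s \<le> e) (eig_mset C))"
    using form by (intro symmetric_card_eigenvalues_at_least_ge[OF C]) (auto simp: ones_def coord_def)
  ultimately show ?thesis
    unfolding lambda2_def C_def[symmetric] using nd by (intro second_largest_eq) auto
qed

lemma dist_matrix_eq_centered_plus_lambda2:
  assumes "\<forall>i<n. x i \<in> carrier_vec d" and "d + 2 < n"
  shows "dist_matrix n x = centered (dist_matrix n x) + lambda2 (centered (dist_matrix n x)) \<cdot>\<^sub>m Jmat n"
proof -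
  have "centered (dist_matrix n x) = dist_matrix n x - sigma (dist_matrix n x) \<cdot>\<^sub>m Jmat n"
    unfolding centered_def by (simp add: dist_matrix_def)
  thus ?thesis using lambda2_dist_matrix_minus_Jmat[OF assms]
    by (auto intro!: eq_matI simp: dist_matrix_def Jmat_def)
qed

lemma dist_matrix_plus_Jmat_eq_imp_zero:
  assumes x: "\<forall>i<n. x i \<in> carrier_vec d" and y: "\<forall>i<n. y i \<in> carrier_vec d" and nd: "d + 2 < n"
    and xy: "dist_matrix n y = dist_matrix n x + c \<cdot>\<^sub>m Jmat n"
  shows "c = 0"
proof -
  have "dist_matrix n y - 0 \<cdot>\<^sub>m Jmat n = dist_matrix n x - (- c) \<cdot>\<^sub>m Jmat n"
    unfolding xy by (auto intro!: eq_matI simp: dist_matrix_def Jmat_def)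
  thus ?thesis
    using lambda2_dist_matrix_minus_Jmat[OF x nd, of "- c"] lambda2_dist_matrix_minus_Jmat[OF y nd, of 0]
    by simp
qed

text \<open>By \<open>\<Delta>\<close>, each row of the difference is constant off the diagonal (this needs a third
  index), and symmetry makes all rows share that constant.\<close>
lemma Delta_eq_imp_diff_Jmat:
  fixes A B :: "real mat"
  assumes carr: "A \<in> carrier_mat n n" "B \<in> carrier_mat n n" and sym: "A\<^sup>T = A" "B\<^sup>T = B"
    and hollow: "\<forall>i<n. A $$ (i,i) = 0" "\<forall>i<n. B $$ (i,i) = 0"
    and n: "3 \<le> n" and Delta: "Delta A = Delta B"
  shows "\<exists>c. A = B + c \<cdot>\<^sub>m Jmat n"
proof -
  define E where "E i j = A $$ (i,j) - B $$ (i,j)" for i j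
  have E_sym: "E a b = E b a" if "a < n" "b < n" for a b
    using symmetric_mat_index[OF carr(1) sym(1) that] symmetric_mat_index[OF carr(2) sym(2) that]
    unfolding E_def by simp
  have E_row_lt: "E a b = E a c" if "a < n" "b < n" "c < n" "a \<noteq> b" "a \<noteq> c" "b < c" for a b c
    using fun_cong[OF Delta, of "(a,b,c)"] that carr unfolding Delta_def E_def by simp
  have E_row: "E a b = E a c" if "a < n" "b < n" "c < n" "a \<noteq> b" "a \<noteq> c" for a b c
  proof (cases b c rule: linorder_cases)
    case less
    thus ?thesis using E_row_lt[of a b c] that by blast
  next
    case greater
    thus ?thesis using E_row_lt[of a c b] that by simp
  qed simp
  define r where "r a = E a (if a = 0 then 1 else 0)" for a
  have row_r: "E a b = r a" if "a < n" "b < n" "a \<noteq> b" for a b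
    using E_row[of a b "if a = 0 then 1 else 0"] that n unfolding r_def by (cases "b = (if a = 0 then 1 else 0)") auto
  have const: "E a b = r 0" if "a < n" "b < n" "a \<noteq> b" for a b
  proof (cases "a = 0")
    case False
    with that n have "E a b = E 0 a" using row_r[of a b] row_r[of a 0] E_sym[of a 0] by auto
    thus ?thesis using row_r[of 0 a] that False by auto
  qed (use row_r that in auto)
  show ?thesis
  proof (intro exI[of _ "r 0"] eq_matI)
    fix i j assume "i < dim_row (B + r 0 \<cdot>\<^sub>m Jmat n)" "j < dim_col (B + r 0 \<cdot>\<^sub>m Jmat n)"
    hence ij: "i < n" "j < n" using carr by (simp_all add: Jmat_def)
    show "A $$ (i,j) = (B + r 0 \<cdot>\<^sub>m Jmat n) $$ (i,j)"
    proof (cases "i = j")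
      case True
      thus ?thesis using hollow ij carr by (simp add: Jmat_def)
    next
      case False
      thus ?thesis using const[OF ij False] ij carr by (simp add: Jmat_def E_def)
    qed
  qed (use carr in \<open>simp_all add: Jmat_def\<close>)
qed

theorem theorem4:
  fixes n d :: nat and x :: "nat \<Rightarrow> real vec"
  assumes "\<forall>i<n. x i \<in> carrier_vec d"
    and "n > d + 2"
  shows "dist_matrix n x = centered (dist_matrix n x)
           + lambda2 (centered (dist_matrix n x)) \<cdot>\<^sub>m Jmat n
       \<and> (\<forall>y. (\<forall>i<n. y i \<in> carrier_vec d) \<longrightarrow>
            centered (dist_matrix n y) = centered (dist_matrix n x) \<longrightarrow>
            dist_matrix n y = dist_matrix n x)
       \<and> (\<forall>y. (\<forall>i<n. y i \<in> carrier_vec d) \<longrightarrow>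
            Delta (dist_matrix n y) = Delta (dist_matrix n x) \<longrightarrow>
            dist_matrix n y = dist_matrix n x)"
proof (intro conjI allI impI)
  note x = assms(1) and nd = assms(2)
  show "dist_matrix n x = centered (dist_matrix n x) + lambda2 (centered (dist_matrix n x)) \<cdot>\<^sub>m Jmat n"
    using dist_matrix_eq_centered_plus_lambda2[OF x nd] .
  fix y :: "nat \<Rightarrow> real vec"
  assume y: "\<forall>i<n. y i \<in> carrier_vec d"
  show "dist_matrix n y = dist_matrix n x"
    if "centered (dist_matrix n y) = centered (dist_matrix n x)"
    using dist_matrix_eq_centered_plus_lambda2[OF y nd] dist_matrix_eq_centered_plus_lambda2[OF x nd]
    unfolding that by simp
  show "dist_matrix n y = dist_matrix n x"
    if "Delta (dist_matrix n y) = Delta (dist_matrix n x)"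
  proof -
    have "\<exists>c. dist_matrix n y = dist_matrix n x + c \<cdot>\<^sub>m Jmat n"
      using dist_matrix_diag[OF x] dist_matrix_diag[OF y] nd
      by (intro Delta_eq_imp_diff_Jmat[OF dist_matrix_carrier dist_matrix_carrier
          dist_matrix_transpose[OF y] dist_matrix_transpose[OF x] _ _ _ that]) auto
    then obtain c where c: "dist_matrix n y = dist_matrix n x + c \<cdot>\<^sub>m Jmat n" ..
    with dist_matrix_plus_Jmat_eq_imp_zero[OF x y nd c] show ?thesis
      by (auto intro!: eq_matI simp: dist_matrix_def Jmat_def)
  qed
qed

end
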